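(* Let $\lambda=2\cos(\pi/5)$ and let $H_5$ be the subgroup of $SL(2,\mathbb R)$ generated by $S=\begin{pmatrix}0&1\\-1&0\end{pmatrix}$ and $T=\begin{pmatrix}1&\lambda\\0&1\end{pmatrix}$. Let $p$ be an odd rational prime. Suppose that $H(p)$ contains an element $\sigma$ with $\sigma\equiv\begin{pmatrix}1&p\\0&1\end{pmatrix}\pmod{p^2}$. Then $[H(p^n):H(p^{n+1})]=p^6$ for every positive integer $n$, and $[H_5:H(p^n)]=p^{6(n-1)}[H_5:H(p)]$ for every positive integer $n$.
   Context: For $\alpha\in\mathbb Z[\lambda]$, $H(\alpha)=\{(a_{ij})\in H_5 : a_{11}-1,\ a_{22}-1,\ a_{12},\ a_{21}\in \alpha\mathbb Z[\lambda]\}$. Congruence of matrices modulo $p^2$ means entrywise congruence modulo the ideal $p^2\mathbb Z[\lambda]$. *)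

theory Defs
  imports "HOL-Analysis.Analysis"
begin

definition mat2 :: "real \<Rightarrow> real \<Rightarrow> real \<Rightarrow> real \<Rightarrow> real^2^2" where
  "mat2 a b c d = (\<chi> i j. if i = 1 then (if j = 1 then a else b) else (if j = 1 then c else d))"

definition lam :: real where "lam = 2 * cos (pi / 5)"

definition Smat :: "real^2^2" where "Smat = mat2 0 1 (-1) 0"
definition Tmat :: "real^2^2" where "Tmat = mat2 1 lam 0 1"

inductive_set H5 :: "(real^2^2) set" where
  H5_one: "mat 1 \<in> H5"
| H5_S: "A \<in> H5 \<Longrightarrow> A ** Smat \<in> H5"
| H5_Sinv: "A \<in> H5 \<Longrightarrow> A ** matrix_inv Smat \<in> H5"
| H5_T: "A \<in> H5 \<Longrightarrow> A ** Tmat \<in> H5"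
| H5_Tinv: "A \<in> H5 \<Longrightarrow> A ** matrix_inv Tmat \<in> H5"

definition Zlam :: "real set" where
  "Zlam = {of_int a + of_int b * lam | a b. True}"

definition ideal_gen :: "real \<Rightarrow> real set" where
  "ideal_gen \<alpha> = {\<alpha> * x | x. x \<in> Zlam}"

definition Hcong :: "real \<Rightarrow> (real^2^2) set" where
  "Hcong \<alpha> = {A \<in> H5. A$1$1 - 1 \<in> ideal_gen \<alpha> \<and> A$2$2 - 1 \<in> ideal_gen \<alpha>
                    \<and> A$1$2 \<in> ideal_gen \<alpha> \<and> A$2$1 \<in> ideal_gen \<alpha>}"

definition mat_cong :: "real \<Rightarrow> real^2^2 \<Rightarrow> real^2^2 \<Rightarrow> bool" where
  "mat_cong m A B = (\<forall>i j. A$i$j - B$i$j \<in> ideal_gen m)"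

text \<open>Index [G:K] = number of (right) cosets of K in G (0 if infinite).\<close>
definition grp_index :: "(real^2^2) set \<Rightarrow> (real^2^2) set \<Rightarrow> nat" where
  "grp_index G K = card {(\<lambda>k. k ** g) ` K | g. g \<in> G}"

end

theory Submission
  imports Defs
begin

text \<open>For \<open>A \<in> H(q)\<close> write \<open>A = 1 + q X\<close> with \<open>X\<close> over \<open>\<int>[\<lambda>]\<close>. Since \<open>det A = 1\<close>, the trace
  of \<open>X\<close> is divisible by \<open>q\<close>, and for \<open>p | q\<close> the map \<open>A \<mapsto> X mod p\<close> is a homomorphism from
  \<open>H(q)\<close> to the additive group of trace-zero matrices over \<open>\<int>[\<lambda>]/p \<cong> (\<int>/p)\<^sup>2\<close>, a group of order
  \<open>p\<^sup>6\<close>, with kernel \<open>H(pq)\<close>. It is onto: for odd \<open>p\<close>, \<open>(1 + qX)\<^sup>p \<equiv> 1 + pqX\<close> modulo \<open>p\<^sup>2q\<close>,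
  so powers of \<open>\<sigma>\<close> give elements of every \<open>H(p\<^sup>n)\<close> with \<open>X \<equiv> E\<^sub>1\<^sub>2\<close>; conjugating them by
  \<open>g \<in> H\<^sub>5\<close> gives \<open>X \<equiv> g E\<^sub>1\<^sub>2 g\<^sup>-\<^sup>1\<close>, and six such conjugates span \<open>(\<int>/p)\<^sup>6\<close> because \<open>2\<close> is
  invertible modulo \<open>p\<close>. The second claim follows from the first by multiplicativity of the
  index along \<open>H\<^sub>5 \<supseteq> H(p\<^sup>n) \<supseteq> H(p\<^sup>n\<^sup>+\<^sup>1)\<close>.\<close>

lemma lam_times_lam: "lam * lam = lam + 1"
proof -
  define c where "c = cos (pi / 5)"
  have c2: "cos (2 * pi / 5) = 2 * c\<^sup>2 - 1"
    using cos_double_cos[of "pi / 5"] by (simp add: c_def)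
  have c4: "cos (4 * pi / 5) = 2 * (cos (2 * pi / 5))\<^sup>2 - 1"
    using cos_double_cos[of "2 * pi / 5"] by simp
  have "cos (4 * pi / 5) = - c"
    using cos_pi_minus[of "pi / 5"] by (simp add: c_def field_simps)
  hence "- c = 2 * (2 * c\<^sup>2 - 1)\<^sup>2 - 1" using c2 c4 by simp
  hence "(c + 1) * (2 * c - 1) * (4 * c\<^sup>2 - 2 * c - 1) = 0"
    by (simp add: algebra_simps power2_eq_square)
  moreover have "cos (pi / 3) < c"
    unfolding c_def by (rule cos_monotone_0_pi) auto
  hence "(c + 1) * (2 * c - 1) \<noteq> 0" by (simp add: cos_60)
  ultimately have "4 * c\<^sup>2 - 2 * c - 1 = 0" by simp
  thus ?thesis unfolding lam_def c_def[symmetric] by (simp add: algebra_simps power2_eq_square)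
qed

lemma lam_irrational: "lam \<notin> \<rat>"
proof
  assume "lam \<in> \<rat>"
  then obtain r s :: int where s: "s > 0" "coprime r s" "lam = of_int r / of_int s"
    by (auto elim: Rats_cases')
  have "(of_int r / of_int s) * (of_int r / of_int s) = (of_int r / of_int s :: real) + 1"
    using lam_times_lam s(3) by simp
  hence "of_int (r * r) = (of_int (r * s + s * s) :: real)"
    using s(1) by (simp add: field_simps)
  hence e: "r * r = s * (r + s)" by (simp only: of_int_eq_iff) (simp add: algebra_simps)
  have "coprime s (r * r)" using s(2) by (simp add: coprime_commute)
  hence "is_unit s" using e by (metis coprime_common_divisor dvd_refl dvd_triv_left)
  hence "s = 1" using s(1) by simp
  hence "r * r = r + 1" using e by simp
  moreover have "even (r * (r - 1))" by simp
  ultimately show False by (simp add: algebra_simps)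
qed

lemma lam_basis_eq_iff:
  "of_int a + of_int b * lam = of_int c + of_int d * lam \<longleftrightarrow> a = c \<and> b = d"
proof
  assume h: "of_int a + of_int b * lam = of_int c + of_int d * lam"
  show "a = c \<and> b = d"
  proof (cases "b = d")
    case False
    hence "lam = (of_int a - of_int c) / (of_int d - of_int b)" using h by (simp add: field_simps)
    also have "\<dots> \<in> \<rat>" by (intro Rats_divide Rats_diff Rats_of_int)
    finally have "lam \<in> \<rat>" .
    thus ?thesis using lam_irrational by simp
  qed (use h in simp)
qed simp

lemma Zlam_I [intro]: "of_int a + of_int b * lam \<in> Zlam"
  unfolding Zlam_def by blast

lemma ZlamE:
  assumes "x \<in> Zlam"
  obtains a b where "x = of_int a + of_int b * lam"
  using assms unfolding Zlam_def by blast

lemma Zlam_add [intro]: "x \<in> Zlam \<Longrightarrow> y \<in> Zlam \<Longrightarrow> x + y \<in> Zlam"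
proof (elim ZlamE)
  fix a b c d
  assume "x = of_int a + of_int b * lam" "y = of_int c + of_int d * lam"
  hence "x + y = of_int (a + c) + of_int (b + d) * lam" by (simp add: algebra_simps)
  thus "x + y \<in> Zlam" by (simp only: Zlam_I)
qed

lemma Zlam_uminus [intro]: "x \<in> Zlam \<Longrightarrow> - x \<in> Zlam"
proof (elim ZlamE)
  fix a b
  assume "x = of_int a + of_int b * lam"
  hence "- x = of_int (- a) + of_int (- b) * lam" by (simp add: algebra_simps)
  thus "- x \<in> Zlam" by (simp only: Zlam_I)
qed

lemma Zlam_diff [intro]: "x \<in> Zlam \<Longrightarrow> y \<in> Zlam \<Longrightarrow> x - y \<in> Zlam"
  using Zlam_add[of x "- y"] by auto

lemma Zlam_mult [intro]: "x \<in> Zlam \<Longrightarrow> y \<in> Zlam \<Longrightarrow> x * y \<in> Zlam"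
proof (elim ZlamE)
  fix a b c d
  assume "x = of_int a + of_int b * lam" "y = of_int c + of_int d * lam"
  hence "x * y = of_int a * of_int c + of_int b * of_int d * (lam * lam)
                 + (of_int a * of_int d + of_int b * of_int c) * lam"
    by (simp add: algebra_simps)
  also have "\<dots> = of_int (a * c + b * d) + of_int (a * d + b * c + b * d) * lam"
    unfolding lam_times_lam by (simp add: algebra_simps)
  finally show "x * y \<in> Zlam" by (simp only: Zlam_I)
qed

lemma Zlam_of_int [simp, intro]: "of_int n \<in> Zlam"
  using Zlam_I[of n 0] by simp

lemma Zlam_of_nat [simp, intro]: "of_nat n \<in> Zlam"
  using Zlam_of_int[of "int n"] by simp

lemma Zlam_0 [simp, intro]: "0 \<in> Zlam"
  using Zlam_of_int[of 0] by simp

lemma Zlam_1 [simp, intro]: "1 \<in> Zlam"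
  using Zlam_of_int[of 1] by simp

lemma Zlam_lam [simp, intro]: "lam \<in> Zlam"
  using Zlam_I[of 0 1] by simp

definition coord0 :: "real \<Rightarrow> int" where
  "coord0 x = (THE a. \<exists>b. x = of_int a + of_int b * lam)"

definition coord1 :: "real \<Rightarrow> int" where
  "coord1 x = (THE b. \<exists>a. x = of_int a + of_int b * lam)"

lemma coord0_eq [simp]: "coord0 (of_int a + of_int b * lam) = a"
  unfolding coord0_def by (rule the_equality) (auto simp: lam_basis_eq_iff)

lemma coord1_eq [simp]: "coord1 (of_int a + of_int b * lam) = b"
  unfolding coord1_def by (rule the_equality) (auto simp: lam_basis_eq_iff)

lemma Zlam_coords: "x \<in> Zlam \<Longrightarrow> x = of_int (coord0 x) + of_int (coord1 x) * lam"
  by (erule ZlamE) simp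

lemma coords_add:
  assumes "x \<in> Zlam" "y \<in> Zlam"
  shows "coord0 (x + y) = coord0 x + coord0 y" "coord1 (x + y) = coord1 x + coord1 y"
proof -
  obtain a b c d where x: "x = of_int a + of_int b * lam" and y: "y = of_int c + of_int d * lam"
    using assms by (elim ZlamE)
  have "x + y = of_int (a + c) + of_int (b + d) * lam" unfolding x y by (simp add: algebra_simps)
  thus "coord0 (x + y) = coord0 x + coord0 y" "coord1 (x + y) = coord1 x + coord1 y"
    unfolding x y by (simp_all only: coord0_eq coord1_eq)
qed

lemma coords_diff:
  assumes "x \<in> Zlam" "y \<in> Zlam"
  shows "coord0 (x - y) = coord0 x - coord0 y" "coord1 (x - y) = coord1 x - coord1 y"
  using coords_add[OF Zlam_diff[OF assms] assms(2)] by simp_all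

lemma ideal_gen_I [intro]: "z \<in> Zlam \<Longrightarrow> \<alpha> * z \<in> ideal_gen \<alpha>"
  unfolding ideal_gen_def by blast

lemma ideal_genE:
  assumes "x \<in> ideal_gen \<alpha>"
  obtains z where "z \<in> Zlam" "x = \<alpha> * z"
  using assms unfolding ideal_gen_def by blast

lemma ideal_gen_0 [simp, intro]: "0 \<in> ideal_gen \<alpha>"
  using ideal_gen_I[OF Zlam_0] by simp

lemma ideal_gen_add [intro]: "x \<in> ideal_gen \<alpha> \<Longrightarrow> y \<in> ideal_gen \<alpha> \<Longrightarrow> x + y \<in> ideal_gen \<alpha>"
  by (elim ideal_genE) (metis Zlam_add distrib_left ideal_gen_I)

lemma ideal_gen_uminus [intro]: "x \<in> ideal_gen \<alpha> \<Longrightarrow> - x \<in> ideal_gen \<alpha>"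
  by (elim ideal_genE) (metis Zlam_uminus mult_minus_right ideal_gen_I)

lemma ideal_gen_diff [intro]: "x \<in> ideal_gen \<alpha> \<Longrightarrow> y \<in> ideal_gen \<alpha> \<Longrightarrow> x - y \<in> ideal_gen \<alpha>"
  using ideal_gen_add[of x \<alpha> "- y"] by auto

lemma ideal_gen_mult_left [intro]: "x \<in> Zlam \<Longrightarrow> y \<in> ideal_gen \<alpha> \<Longrightarrow> x * y \<in> ideal_gen \<alpha>"
  by (elim ideal_genE) (metis Zlam_mult mult.left_commute ideal_gen_I)

lemma ideal_gen_mult_right [intro]: "y \<in> ideal_gen \<alpha> \<Longrightarrow> x \<in> Zlam \<Longrightarrow> y * x \<in> ideal_gen \<alpha>"
  using ideal_gen_mult_left[of x y \<alpha>] by (simp add: mult.commute)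

abbreviation ideal_nat :: "nat \<Rightarrow> real set" where
  "ideal_nat m \<equiv> ideal_gen (real m)"

lemma ideal_nat_iff: "x \<in> ideal_nat m \<longleftrightarrow> x \<in> Zlam \<and> int m dvd coord0 x \<and> int m dvd coord1 x"
proof
  assume "x \<in> ideal_nat m"
  then obtain z where z: "z \<in> Zlam" "x = real m * z" by (elim ideal_genE)
  then obtain a b where "z = of_int a + of_int b * lam" by (elim ZlamE)
  hence "x = of_int (int m * a) + of_int (int m * b) * lam" using z by (simp add: algebra_simps)
  thus "x \<in> Zlam \<and> int m dvd coord0 x \<and> int m dvd coord1 x"
    by (simp only: Zlam_I coord0_eq coord1_eq dvd_triv_left simp_thms)
next
  assume h: "x \<in> Zlam \<and> int m dvd coord0 x \<and> int m dvd coord1 x"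
  then obtain a b where "coord0 x = int m * a" "coord1 x = int m * b" by (auto elim!: dvdE)
  hence "x = real m * (of_int a + of_int b * lam)"
    using Zlam_coords[of x] h by (simp add: algebra_simps)
  thus "x \<in> ideal_nat m" by auto
qed

lemma ideal_nat_dvd_mono: "m dvd n \<Longrightarrow> ideal_nat n \<subseteq> ideal_nat m"
  using dvd_trans[of "int m" "int n"] by (auto simp: ideal_nat_iff)

lemma ideal_nat_mult_cancel:
  assumes "m > 0" "z \<in> Zlam"
  shows "real m * z \<in> ideal_nat (m * n) \<longleftrightarrow> z \<in> ideal_nat n"
proof
  assume "real m * z \<in> ideal_nat (m * n)"
  then obtain u where "u \<in> Zlam" "real m * z = real (m * n) * u" by (elim ideal_genE)
  thus "z \<in> ideal_nat n" using assms(1) by auto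
next
  assume "z \<in> ideal_nat n"
  then obtain u where "u \<in> Zlam" "z = real n * u" by (elim ideal_genE)
  thus "real m * z \<in> ideal_nat (m * n)" using ideal_gen_I[of u "real (m * n)"] by (simp add: mult.assoc)
qed

lemma ideal_nat_divide: "q > 0 \<Longrightarrow> x \<in> ideal_nat q \<Longrightarrow> x / real q \<in> Zlam"
  by (elim ideal_genE) simp

definition coords_mod :: "nat \<Rightarrow> real \<Rightarrow> int \<times> int" where
  "coords_mod m x = (coord0 x mod int m, coord1 x mod int m)"

lemma coords_mod_eq_iff:
  "x \<in> Zlam \<Longrightarrow> y \<in> Zlam \<Longrightarrow> coords_mod m x = coords_mod m y \<longleftrightarrow> x - y \<in> ideal_nat m"
  by (simp add: coords_mod_def ideal_nat_iff coords_diff mod_eq_dvd_iff Zlam_diff)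

lemma mat2_nth [simp]:
  "mat2 a b c d $ 1 $ 1 = a" "mat2 a b c d $ 1 $ 2 = b"
  "mat2 a b c d $ 2 $ 1 = c" "mat2 a b c d $ 2 $ 2 = d"
  unfolding mat2_def by simp_all

lemma mat_2x2_eq_iff:
  "(A :: real^2^2) = B \<longleftrightarrow> A$1$1 = B$1$1 \<and> A$1$2 = B$1$2 \<and> A$2$1 = B$2$1 \<and> A$2$2 = B$2$2"
  by (auto simp: vec_eq_iff forall_2)

lemma matrix_mult_2x2_nth [simp]: "((A :: real^2^2) ** B) $ i $ j = A$i$1 * B$1$j + A$i$2 * B$2$j"
  by (simp add: matrix_matrix_mult_def sum_2)

lemma mat_1_2x2_nth [simp]:
  "(mat 1 :: real^2^2) $ 1 $ 1 = 1" "(mat 1 :: real^2^2) $ 1 $ 2 = 0"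
  "(mat 1 :: real^2^2) $ 2 $ 1 = 0" "(mat 1 :: real^2^2) $ 2 $ 2 = 1"
  by (simp_all add: mat_def)

lemma mat_1_eq_mat2: "(mat 1 :: real^2^2) = mat2 1 0 0 1"
  by (simp add: mat_2x2_eq_iff)

lemma mat2_mult [simp]:
  "mat2 a b c d ** mat2 e f g h = mat2 (a*e + b*g) (a*f + b*h) (c*e + d*g) (c*f + d*h)"
  by (simp add: mat_2x2_eq_iff)

definition Zlam_mat :: "real^2^2 \<Rightarrow> bool" where
  "Zlam_mat A \<longleftrightarrow> A$1$1 \<in> Zlam \<and> A$1$2 \<in> Zlam \<and> A$2$1 \<in> Zlam \<and> A$2$2 \<in> Zlam"

lemma Zlam_mat_mat2 [simp]: "Zlam_mat (mat2 a b c d) \<longleftrightarrow> a \<in> Zlam \<and> b \<in> Zlam \<and> c \<in> Zlam \<and> d \<in> Zlam"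
  by (simp add: Zlam_mat_def)

lemma Zlam_mat_1: "Zlam_mat (mat 1)"
  by (simp add: Zlam_mat_def)

lemma Zlam_mat_mult: "Zlam_mat A \<Longrightarrow> Zlam_mat B \<Longrightarrow> Zlam_mat (A ** B)"
  by (auto simp: Zlam_mat_def)

lemma Zlam_mat_add: "Zlam_mat A \<Longrightarrow> Zlam_mat B \<Longrightarrow> Zlam_mat (A + B)"
  by (auto simp: Zlam_mat_def)

lemma Zlam_mat_scaleR: "Zlam_mat A \<Longrightarrow> Zlam_mat (real n *\<^sub>R A)"
  by (auto simp: Zlam_mat_def)

definition adj2 :: "real^2^2 \<Rightarrow> real^2^2" where
  "adj2 A = mat2 (A$2$2) (- A$1$2) (- A$2$1) (A$1$1)"

lemma adj2_mult: "adj2 (A ** B) = adj2 B ** adj2 A"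
  by (simp add: adj2_def mat_2x2_eq_iff algebra_simps)

lemma mult_adj2_right: "det A = 1 \<Longrightarrow> A ** adj2 A = mat 1"
  by (simp add: adj2_def mat_2x2_eq_iff det_2 algebra_simps)

lemma mult_adj2_left: "det A = 1 \<Longrightarrow> adj2 A ** A = mat 1"
  by (simp add: adj2_def mat_2x2_eq_iff det_2 algebra_simps)

lemma Zlam_mat_adj2: "Zlam_mat A \<Longrightarrow> Zlam_mat (adj2 A)"
  by (auto simp: adj2_def Zlam_mat_def)

lemma matrix_inv_eqI:
  assumes "(A :: real^2^2) ** B = mat 1" "B ** A = mat 1"
  shows "matrix_inv A = B"
proof -
  have "A ** matrix_inv A = mat 1 \<and> matrix_inv A ** A = mat 1"
    unfolding matrix_inv_def by (rule someI[of _ B]) (use assms in blast)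
  hence "matrix_inv A = matrix_inv A ** (A ** B)" "matrix_inv A ** A = mat 1"
    using assms by simp_all
  thus ?thesis by (simp add: matrix_mul_assoc)
qed

lemma matrix_inv_Smat: "matrix_inv Smat = mat2 0 (-1) 1 0"
  by (rule matrix_inv_eqI) (simp_all add: Smat_def mat_1_eq_mat2)

lemma matrix_inv_Tmat: "matrix_inv Tmat = mat2 1 (- lam) 0 1"
  by (rule matrix_inv_eqI) (simp_all add: Tmat_def mat_1_eq_mat2)

lemma H5_generators_SL2_Zlam:
  "Zlam_mat Smat" "det Smat = 1" "Zlam_mat (matrix_inv Smat)" "det (matrix_inv Smat) = 1"
  "Zlam_mat Tmat" "det Tmat = 1" "Zlam_mat (matrix_inv Tmat)" "det (matrix_inv Tmat) = 1"
  by (simp_all add: matrix_inv_Smat matrix_inv_Tmat, simp_all add: Smat_def Tmat_def det_2 Zlam_uminus)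

lemma H5_SL2_Zlam: "A \<in> H5 \<Longrightarrow> Zlam_mat A \<and> det A = 1"
  by (induction rule: H5.induct)
     (simp_all add: Zlam_mat_1 Zlam_mat_mult det_mul H5_generators_SL2_Zlam)

lemma H5_Zlam_mat: "A \<in> H5 \<Longrightarrow> Zlam_mat A"
  using H5_SL2_Zlam by blast

lemma H5_det: "A \<in> H5 \<Longrightarrow> det A = 1"
  using H5_SL2_Zlam by blast

lemma H5_mult:
  assumes "A \<in> H5" "B \<in> H5"
  shows "A ** B \<in> H5"
  using assms(2)
proof (induction rule: H5.induct)
  case H5_one show ?case using assms(1) by simp
next
  case (H5_S B) thus ?case using H5.H5_S[of "A ** B"] by (simp add: matrix_mul_assoc)
next
  case (H5_Sinv B) thus ?case using H5.H5_Sinv[of "A ** B"] by (simp add: matrix_mul_assoc)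
next
  case (H5_T B) thus ?case using H5.H5_T[of "A ** B"] by (simp add: matrix_mul_assoc)
next
  case (H5_Tinv B) thus ?case using H5.H5_Tinv[of "A ** B"] by (simp add: matrix_mul_assoc)
qed

lemma Smat_in_H5: "Smat \<in> H5"
  using H5_S[OF H5_one] by simp

lemma Tmat_in_H5: "Tmat \<in> H5"
  using H5_T[OF H5_one] by simp

lemma matrix_inv_Smat_in_H5: "matrix_inv Smat \<in> H5"
  using H5_Sinv[OF H5_one] by simp

lemma matrix_inv_Tmat_in_H5: "matrix_inv Tmat \<in> H5"
  using H5_Tinv[OF H5_one] by simp

lemma H5_adj2: "A \<in> H5 \<Longrightarrow> adj2 A \<in> H5"
proof (induction rule: H5.induct)
  case H5_one
  thus ?case by (simp add: mat_1_eq_mat2 adj2_def H5.H5_one[unfolded mat_1_eq_mat2])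
next
  case (H5_S A)
  have "adj2 Smat = matrix_inv Smat" unfolding matrix_inv_Smat by (simp add: Smat_def adj2_def)
  thus ?case using H5_S by (simp add: adj2_mult H5_mult matrix_inv_Smat_in_H5)
next
  case (H5_Sinv A)
  have "adj2 (matrix_inv Smat) = Smat" unfolding matrix_inv_Smat by (simp add: Smat_def adj2_def)
  thus ?case using H5_Sinv by (simp add: adj2_mult H5_mult Smat_in_H5)
next
  case (H5_T A)
  have "adj2 Tmat = matrix_inv Tmat" unfolding matrix_inv_Tmat by (simp add: Tmat_def adj2_def)
  thus ?case using H5_T by (simp add: adj2_mult H5_mult matrix_inv_Tmat_in_H5)
next
  case (H5_Tinv A)
  have "adj2 (matrix_inv Tmat) = Tmat" unfolding matrix_inv_Tmat by (simp add: Tmat_def adj2_def)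
  thus ?case using H5_Tinv by (simp add: adj2_mult H5_mult Tmat_in_H5)
qed

lemma mat_cong_iff:
  "mat_cong \<alpha> A B \<longleftrightarrow> A$1$1 - B$1$1 \<in> ideal_gen \<alpha> \<and> A$1$2 - B$1$2 \<in> ideal_gen \<alpha>
                     \<and> A$2$1 - B$2$1 \<in> ideal_gen \<alpha> \<and> A$2$2 - B$2$2 \<in> ideal_gen \<alpha>"
  unfolding mat_cong_def by (simp add: forall_2)

lemma mat_cong_refl: "mat_cong \<alpha> A A"
  by (simp add: mat_cong_iff)

lemma mat_cong_sym: "mat_cong \<alpha> A B \<Longrightarrow> mat_cong \<alpha> B A"
  unfolding mat_cong_iff by (metis ideal_gen_uminus minus_diff_eq)

lemma mat_cong_trans: "mat_cong \<alpha> A B \<Longrightarrow> mat_cong \<alpha> B C \<Longrightarrow> mat_cong \<alpha> A C"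
proof -
  have "a - c = (a - b) + (b - c)" for a b c :: real by simp
  thus "mat_cong \<alpha> A B \<Longrightarrow> mat_cong \<alpha> B C \<Longrightarrow> mat_cong \<alpha> A C"
    unfolding mat_cong_iff by (metis ideal_gen_add)
qed

lemma mat_cong_dvd_mono: "k dvd m \<Longrightarrow> mat_cong (real m) A B \<Longrightarrow> mat_cong (real k) A B"
  unfolding mat_cong_iff using ideal_nat_dvd_mono by blast

lemma mat_cong_mult_right:
  assumes "Zlam_mat C" "mat_cong \<alpha> A B"
  shows "mat_cong \<alpha> (A ** C) (B ** C)"
proof -
  have "(A ** C)$i$j - (B ** C)$i$j = (A$i$1 - B$i$1) * C$1$j + (A$i$2 - B$i$2) * C$2$j" for i j
    by (simp add: algebra_simps)
  thus ?thesis using assms unfolding mat_cong_iff Zlam_mat_def by auto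
qed

lemma mat_cong_mult_left:
  assumes "Zlam_mat C" "mat_cong \<alpha> A B"
  shows "mat_cong \<alpha> (C ** A) (C ** B)"
proof -
  have "(C ** A)$i$j - (C ** B)$i$j = C$i$1 * (A$1$j - B$1$j) + C$i$2 * (A$2$j - B$2$j)" for i j
    by (simp add: algebra_simps)
  thus ?thesis using assms unfolding mat_cong_iff Zlam_mat_def by auto
qed

lemma mat_cong_mult_right_iff:
  assumes "Zlam_mat C" "det C = 1"
  shows "mat_cong \<alpha> (A ** C) (B ** C) \<longleftrightarrow> mat_cong \<alpha> A B"
proof
  assume "mat_cong \<alpha> (A ** C) (B ** C)"
  hence "mat_cong \<alpha> (A ** C ** adj2 C) (B ** C ** adj2 C)"
    by (rule mat_cong_mult_right[OF Zlam_mat_adj2[OF assms(1)]])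
  thus "mat_cong \<alpha> A B" by (simp add: matrix_mul_assoc[symmetric] mult_adj2_right[OF assms(2)])
qed (use assms(1) mat_cong_mult_right in blast)

lemma mat_cong_add_multiple: "Zlam_mat X \<Longrightarrow> mat_cong \<alpha> (\<alpha> *\<^sub>R X + C) C"
  unfolding mat_cong_iff Zlam_mat_def by auto

definition mat_mod :: "nat \<Rightarrow> real^2^2 \<Rightarrow> (int \<times> int) \<times> (int \<times> int) \<times> (int \<times> int) \<times> (int \<times> int)" where
  "mat_mod m A = (coords_mod m (A$1$1), coords_mod m (A$1$2), coords_mod m (A$2$1), coords_mod m (A$2$2))"

lemma mat_mod_eq_iff:
  "Zlam_mat A \<Longrightarrow> Zlam_mat B \<Longrightarrow> mat_mod m A = mat_mod m B \<longleftrightarrow> mat_cong (real m) A B"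
  unfolding mat_mod_def mat_cong_iff Zlam_mat_def by (simp add: coords_mod_eq_iff)

lemma finite_mat_mod_image: "m > 0 \<Longrightarrow> finite (mat_mod m ` S)"
proof -
  let ?B = "{0..<int m} \<times> {0..<int m}"
  assume "m > 0"
  hence "mat_mod m ` S \<subseteq> ?B \<times> ?B \<times> ?B \<times> ?B" by (auto simp: mat_mod_def coords_mod_def)
  thus ?thesis by (rule finite_subset) simp
qed

lemma Hcong_iff: "A \<in> Hcong \<alpha> \<longleftrightarrow> A \<in> H5 \<and> mat_cong \<alpha> A (mat 1)"
  unfolding Hcong_def mat_cong_iff by auto

lemma Hcong_subset_H5: "Hcong \<alpha> \<subseteq> H5"
  by (auto simp: Hcong_iff)

lemma mat_cong_iff_mult_adj2_Hcong:
  assumes "A \<in> H5" "B \<in> H5"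
  shows "mat_cong \<alpha> A B \<longleftrightarrow> A ** adj2 B \<in> Hcong \<alpha>"
proof -
  have "mat_cong \<alpha> A B \<longleftrightarrow> mat_cong \<alpha> (A ** adj2 B) (B ** adj2 B)"
    using assms by (metis H5_Zlam_mat H5_adj2 H5_det mat_cong_mult_right_iff)
  thus ?thesis using assms by (simp add: Hcong_iff H5_mult H5_adj2 mult_adj2_right H5_det)
qed

definition subgroup_H5 :: "(real^2^2) set \<Rightarrow> bool" where
  "subgroup_H5 K \<longleftrightarrow> K \<subseteq> H5 \<and> mat 1 \<in> K \<and> (\<forall>A\<in>K. \<forall>B\<in>K. A ** B \<in> K) \<and> (\<forall>A\<in>K. adj2 A \<in> K)"

lemma subgroup_H5_Hcong: "subgroup_H5 (Hcong \<alpha>)"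
proof -
  have div: "A ** adj2 B \<in> Hcong \<alpha>" if "A \<in> Hcong \<alpha>" "B \<in> Hcong \<alpha>" for A B
    using that by (meson Hcong_iff mat_cong_iff_mult_adj2_Hcong mat_cong_trans mat_cong_sym)
  have one: "mat 1 \<in> Hcong \<alpha>" by (simp add: Hcong_iff mat_cong_refl H5_one)
  have adj: "adj2 A \<in> Hcong \<alpha>" if "A \<in> Hcong \<alpha>" for A
    using div[OF one that] by simp
  have "adj2 (adj2 A) = A" for A by (simp add: adj2_def mat_2x2_eq_iff)
  hence "A ** B \<in> Hcong \<alpha>" if "A \<in> Hcong \<alpha>" "B \<in> Hcong \<alpha>" for A B
    using div[OF that(1) adj[OF that(2)]] by simp
  thus ?thesis unfolding subgroup_H5_def using Hcong_subset_H5 one adj by blast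
qed

lemma right_coset_eq_iff:
  assumes K: "subgroup_H5 K" and "g \<in> H5" "h \<in> H5"
  shows "(\<lambda>k. k ** g) ` K = (\<lambda>k. k ** h) ` K \<longleftrightarrow> g ** adj2 h \<in> K"
proof
  assume "(\<lambda>k. k ** g) ` K = (\<lambda>k. k ** h) ` K"
  moreover have "g \<in> (\<lambda>k. k ** g) ` K" using K unfolding subgroup_H5_def by force
  ultimately obtain k where "k \<in> K" "g = k ** h" by auto
  thus "g ** adj2 h \<in> K"
    using mult_adj2_right[OF H5_det[OF \<open>h \<in> H5\<close>]] by (simp add: matrix_mul_assoc[symmetric])
next
  define c where "c = g ** adj2 h"
  assume "g ** adj2 h \<in> K"
  hence c: "c \<in> K" "adj2 c \<in> K" "det c = 1" using K H5_det unfolding c_def subgroup_H5_def by auto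
  have g: "g = c ** h"
    unfolding c_def using mult_adj2_left[OF H5_det[OF \<open>h \<in> H5\<close>]] by (simp add: matrix_mul_assoc[symmetric])
  hence h: "h = adj2 c ** g" using mult_adj2_left[OF c(3)] by (simp add: matrix_mul_assoc)
  have "k ** g \<in> (\<lambda>k. k ** h) ` K" if "k \<in> K" for k
    using that c K g unfolding subgroup_H5_def by (auto simp: matrix_mul_assoc image_iff)
  moreover have "k ** h \<in> (\<lambda>k. k ** g) ` K" if "k \<in> K" for k
    using that c K h unfolding subgroup_H5_def by (auto simp: matrix_mul_assoc image_iff)
  ultimately show "(\<lambda>k. k ** g) ` K = (\<lambda>k. k ** h) ` K" by blast
qed

lemma card_image_same_kernel:
  assumes "\<And>x y. x \<in> G \<Longrightarrow> y \<in> G \<Longrightarrow> F x = F y \<longleftrightarrow> f x = f y"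
  shows "card (F ` G) = card (f ` G)"
proof -
  define t where "t y = F (inv_into G f y)" for y
  have inv: "x \<in> G \<Longrightarrow> inv_into G f (f x) \<in> G \<and> f (inv_into G f (f x)) = f x" for x
    by (simp add: inv_into_into f_inv_into_f)
  have tf: "t (f x) = F x" if "x \<in> G" for x
    using inv[OF that] assms that unfolding t_def by blast
  hence "t ` f ` G = F ` G" by (auto simp: image_iff)
  moreover have "inj_on t (f ` G)"
  proof (rule inj_onI)
    fix a b assume "a \<in> f ` G" "b \<in> f ` G" "t a = t b"
    then obtain x y where "x \<in> G" "y \<in> G" "a = f x" "b = f y" "F x = F y"
      using tf by auto
    thus "a = b" using assms by simp
  qed
  ultimately show ?thesis using card_image by metis
qed

lemma grp_index_eq_card_image:
  assumes "subgroup_H5 K" "G \<subseteq> H5"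
    and "\<And>g h. g \<in> G \<Longrightarrow> h \<in> G \<Longrightarrow> f g = f h \<longleftrightarrow> g ** adj2 h \<in> K"
  shows "grp_index G K = card (f ` G)"
proof -
  have "{(\<lambda>k. k ** g) ` K | g. g \<in> G} = (\<lambda>g. (\<lambda>k. k ** g) ` K) ` G" by blast
  hence "grp_index G K = card ((\<lambda>g. (\<lambda>k. k ** g) ` K) ` G)"
    unfolding grp_index_def by simp
  also have "\<dots> = card (f ` G)"
    by (rule card_image_same_kernel) (use assms right_coset_eq_iff in blast)
  finally show ?thesis .
qed

lemma card_image_by_fibres:
  assumes "finite (F ` G)" "finite (f ` G)"
    and "\<And>x y. x \<in> G \<Longrightarrow> y \<in> G \<Longrightarrow> F x = F y \<Longrightarrow> f x = f y"
    and "\<And>x. x \<in> G \<Longrightarrow> card (F ` {y \<in> G. f y = f x}) = c"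
  shows "card (F ` G) = c * card (f ` G)"
proof -
  have "F ` G = (\<Union>x \<in> f ` G. F ` {y \<in> G. f y = x})" by auto
  also have "card \<dots> = (\<Sum>x \<in> f ` G. card (F ` {y \<in> G. f y = x}))"
  proof (rule card_UN_disjoint)
    show "\<forall>x \<in> f ` G. finite (F ` {y \<in> G. f y = x})"
      using assms(1) by (auto intro: finite_subset[rotated])
    show "\<forall>x \<in> f ` G. \<forall>x' \<in> f ` G. x \<noteq> x' \<longrightarrow> F ` {y \<in> G. f y = x} \<inter> F ` {y \<in> G. f y = x'} = {}"
      using assms(3) by blast
  qed (rule assms(2))
  also have "\<dots> = (\<Sum>x \<in> f ` G. c)" by (rule sum.cong) (auto simp: assms(4))
  finally show ?thesis by simp
qed

lemma grp_index_Hcong_eq_card_mat_mod: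
  assumes "G \<subseteq> H5"
  shows "grp_index G (Hcong (real m)) = card (mat_mod m ` G)"
proof (rule grp_index_eq_card_image[OF subgroup_H5_Hcong assms])
  fix g h assume "g \<in> G" "h \<in> G"
  hence "g \<in> H5" "h \<in> H5" using assms by auto
  thus "mat_mod m g = mat_mod m h \<longleftrightarrow> g ** adj2 h \<in> Hcong (real m)"
    by (simp add: mat_mod_eq_iff H5_Zlam_mat mat_cong_iff_mult_adj2_Hcong)
qed

lemma mat_cong_class_eq_right_coset:
  assumes "g \<in> H5"
  shows "{y \<in> H5. mat_cong \<alpha> y g} = (\<lambda>k. k ** g) ` Hcong \<alpha>"
proof (intro set_eqI iffI)
  fix y assume y: "y \<in> {y \<in> H5. mat_cong \<alpha> y g}"
  have "y = (y ** adj2 g) ** g"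
    using mult_adj2_left[OF H5_det[OF assms]] by (simp add: matrix_mul_assoc[symmetric])
  moreover have "y ** adj2 g \<in> Hcong \<alpha>" using y assms mat_cong_iff_mult_adj2_Hcong by blast
  ultimately show "y \<in> (\<lambda>k. k ** g) ` Hcong \<alpha>" by blast
next
  fix y assume "y \<in> (\<lambda>k. k ** g) ` Hcong \<alpha>"
  then obtain k where k: "k \<in> Hcong \<alpha>" "y = k ** g" by blast
  hence "y \<in> H5" using Hcong_subset_H5 assms H5_mult by blast
  moreover have "y ** adj2 g = k"
    using k mult_adj2_right[OF H5_det[OF assms]] by (simp add: matrix_mul_assoc[symmetric])
  ultimately show "y \<in> {y \<in> H5. mat_cong \<alpha> y g}"
    using k assms mat_cong_iff_mult_adj2_Hcong by auto
qed

lemma grp_index_Hcong_tower: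
  assumes "M > 0" "m dvd M"
  shows "grp_index H5 (Hcong (real M))
         = grp_index H5 (Hcong (real m)) * grp_index (Hcong (real m)) (Hcong (real M))"
proof -
  have "m > 0" using assms by (rule dvd_pos_nat)
  have fibre: "card (mat_mod M ` {y \<in> H5. mat_mod m y = mat_mod m g}) = card (mat_mod M ` Hcong (real m))"
    if g: "g \<in> H5" for g
  proof -
    have "{y \<in> H5. mat_mod m y = mat_mod m g} = {y \<in> H5. mat_cong (real m) y g}"
      using g by (auto simp: mat_mod_eq_iff H5_Zlam_mat)
    hence "mat_mod M ` {y \<in> H5. mat_mod m y = mat_mod m g} = (\<lambda>k. mat_mod M (k ** g)) ` Hcong (real m)"
      unfolding mat_cong_class_eq_right_coset[OF g] by auto
    also have "card \<dots> = card (mat_mod M ` Hcong (real m))"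
    proof (rule card_image_same_kernel)
      fix k k' assume "k \<in> Hcong (real m)" "k' \<in> Hcong (real m)"
      hence "k \<in> H5" "k' \<in> H5" using Hcong_subset_H5 by auto
      thus "mat_mod M (k ** g) = mat_mod M (k' ** g) \<longleftrightarrow> mat_mod M k = mat_mod M k'"
        using g by (simp add: mat_mod_eq_iff H5_Zlam_mat H5_mult H5_det mat_cong_mult_right_iff)
    qed
    finally show ?thesis .
  qed
  have "card (mat_mod M ` H5) = card (mat_mod M ` Hcong (real m)) * card (mat_mod m ` H5)"
  proof (rule card_image_by_fibres[OF finite_mat_mod_image finite_mat_mod_image _ fibre])
    fix x y assume "x \<in> H5" "y \<in> H5" "mat_mod M x = mat_mod M y"
    thus "mat_mod m x = mat_mod m y"
      using mat_cong_dvd_mono[OF assms(2)] by (simp add: mat_mod_eq_iff H5_Zlam_mat)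
  qed (use assms \<open>m > 0\<close> in auto)
  thus ?thesis using Hcong_subset_H5 by (simp add: grp_index_Hcong_eq_card_mat_mod)
qed

definition dev :: "nat \<Rightarrow> real^2^2 \<Rightarrow> real^2^2" where
  "dev q A = (1 / real q) *\<^sub>R (A - mat 1)"

lemma dev_eqI: "q > 0 \<Longrightarrow> A = mat 1 + real q *\<^sub>R Y \<Longrightarrow> dev q A = Y"
  unfolding dev_def by (simp add: mat_2x2_eq_iff)

lemma Hcong_dev:
  assumes "q > 0" "A \<in> Hcong (real q)"
  shows "Zlam_mat (dev q A)" "A = mat 1 + real q *\<^sub>R dev q A"
proof -
  have "A$1$1 - 1 \<in> ideal_nat q" "A$1$2 \<in> ideal_nat q" "A$2$1 \<in> ideal_nat q" "A$2$2 - 1 \<in> ideal_nat q"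
    using assms(2) unfolding Hcong_def by auto
  thus "Zlam_mat (dev q A)" unfolding dev_def Zlam_mat_def using ideal_nat_divide[OF assms(1)] by simp
  show "A = mat 1 + real q *\<^sub>R dev q A" unfolding dev_def using assms(1) by (simp add: mat_2x2_eq_iff)
qed

lemma mat_cong_one_plus_cancel:
  assumes "q > 0" "Zlam_mat X" "Zlam_mat Y"
  shows "mat_cong (real (q * m)) (mat 1 + real q *\<^sub>R X) (mat 1 + real q *\<^sub>R Y) \<longleftrightarrow> mat_cong (real m) X Y"
proof -
  have "(mat 1 + real q *\<^sub>R X)$i$j - (mat 1 + real q *\<^sub>R Y)$i$j = real q * (X$i$j - Y$i$j)" for i j
    by (simp add: algebra_simps)
  moreover have "real q * z \<in> ideal_nat (q * m) \<longleftrightarrow> z \<in> ideal_nat m" if "z \<in> Zlam" for z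
    using ideal_nat_mult_cancel[OF assms(1) that] .
  ultimately show ?thesis using assms(2,3) unfolding mat_cong_iff Zlam_mat_def
    by (simp only: Zlam_diff)
qed

lemma trace_in_ideal_if_det_one_plus:
  assumes "det (mat 1 + real q *\<^sub>R X) = 1" "q > 0" "Zlam_mat X"
  shows "X$1$1 + X$2$2 \<in> ideal_nat q"
proof -
  have "det (mat 1 + real q *\<^sub>R X) = 1 + real q * (X$1$1 + X$2$2 + real q * det X)"
    by (simp add: det_2 algebra_simps)
  hence "real q * (X$1$1 + X$2$2 + real q * det X) = 0" using assms(1) by simp
  hence "X$1$1 + X$2$2 = real q * (- det X)" using assms(2) by simp
  moreover have "- det X \<in> Zlam" using assms(3) unfolding Zlam_mat_def by (auto simp: det_2)
  ultimately show ?thesis by (simp only: ideal_gen_I)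
qed

lemma mat_cong_traceless_iff:
  assumes "X$1$1 + X$2$2 \<in> ideal_gen \<alpha>" "Y$1$1 + Y$2$2 \<in> ideal_gen \<alpha>"
  shows "mat_cong \<alpha> X Y \<longleftrightarrow>
    X$1$1 - Y$1$1 \<in> ideal_gen \<alpha> \<and> X$1$2 - Y$1$2 \<in> ideal_gen \<alpha> \<and> X$2$1 - Y$2$1 \<in> ideal_gen \<alpha>"
proof -
  have "X$2$2 - Y$2$2 = (X$1$1 + X$2$2) - (Y$1$1 + Y$2$2) - (X$1$1 - Y$1$1)" by simp
  thus ?thesis unfolding mat_cong_iff using assms by (metis ideal_gen_diff)
qed

type_synonym int6 = "int \<times> int \<times> int \<times> int \<times> int \<times> int"

fun add6 :: "int6 \<Rightarrow> int6 \<Rightarrow> int6" where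
  "add6 (a, b, c, d, e, f) (a', b', c', d', e', f') = (a + a', b + b', c + c', d + d', e + e', f + f')"

fun smult6 :: "int \<Rightarrow> int6 \<Rightarrow> int6" where
  "smult6 k (a, b, c, d, e, f) = (k * a, k * b, k * c, k * d, k * e, k * f)"

fun mod6 :: "nat \<Rightarrow> int6 \<Rightarrow> int6" where
  "mod6 p (a, b, c, d, e, f) = (a mod int p, b mod int p, c mod int p, d mod int p, e mod int p, f mod int p)"

lemma mod6_add6_mod6: "mod6 p (add6 (mod6 p x) (mod6 p y)) = mod6 p (add6 x y)"
  by (cases x rule: prod_cases6, cases y rule: prod_cases6) (simp add: mod_add_eq)

definition coords6 :: "real^2^2 \<Rightarrow> int6" where
  "coords6 X = (coord0 (X$1$1), coord1 (X$1$1), coord0 (X$1$2), coord1 (X$1$2), coord0 (X$2$1), coord1 (X$2$1))"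

lemma mod6_coords6_eq_iff:
  assumes "Zlam_mat X" "Zlam_mat Y"
  shows "mod6 p (coords6 X) = mod6 p (coords6 Y) \<longleftrightarrow>
    X$1$1 - Y$1$1 \<in> ideal_nat p \<and> X$1$2 - Y$1$2 \<in> ideal_nat p \<and> X$2$1 - Y$2$1 \<in> ideal_nat p"
  using assms unfolding Zlam_mat_def
  by (simp add: coords6_def coords_mod_eq_iff[symmetric] coords_mod_def conj_assoc)

lemma coords6_add: "Zlam_mat X \<Longrightarrow> Zlam_mat Y \<Longrightarrow> coords6 (X + Y) = add6 (coords6 X) (coords6 Y)"
  by (simp add: coords6_def Zlam_mat_def coords_add)

text \<open>The entries 11, 12, 21 of \<open>dev q A\<close> modulo \<open>p\<close>, in coordinates over the basis \<open>1, lam\<close>;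
  the entry 22 is determined by them since the trace vanishes modulo \<open>p\<close>.\<close>
definition phi :: "nat \<Rightarrow> nat \<Rightarrow> real^2^2 \<Rightarrow> int6" where
  "phi p q A = mod6 p (coords6 (dev q A))"

lemma phi_eq_iff:
  assumes "p dvd q" "q > 0" "A \<in> Hcong (real q)" "B \<in> Hcong (real q)"
  shows "phi p q A = phi p q B \<longleftrightarrow> A ** adj2 B \<in> Hcong (real (p * q))"
proof -
  note XA = Hcong_dev[OF assms(2,3)] and XB = Hcong_dev[OF assms(2,4)]
  have "A \<in> H5" "B \<in> H5" using assms(3,4) Hcong_subset_H5 by auto
  hence "A ** adj2 B \<in> Hcong (real (p * q)) \<longleftrightarrow> mat_cong (real (q * p)) A B"
    using mat_cong_iff_mult_adj2_Hcong[of A B "real (q * p)"] by (simp only: mult.commute)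
  also have "\<dots> \<longleftrightarrow> mat_cong (real p) (dev q A) (dev q B)"
    using mat_cong_one_plus_cancel[OF assms(2) XA(1) XB(1)] XA(2) XB(2) by simp
  also have "\<dots> \<longleftrightarrow> phi p q A = phi p q B"
  proof -
    have "dev q C $1$1 + dev q C $2$2 \<in> ideal_nat p" if "C \<in> Hcong (real q)" for C
      using trace_in_ideal_if_det_one_plus[OF _ assms(2) Hcong_dev(1)[OF assms(2) that]]
            Hcong_dev(2)[OF assms(2) that] H5_det Hcong_subset_H5 that ideal_nat_dvd_mono[OF assms(1)]
      by (metis subsetD)
    thus ?thesis using assms(3,4) XA(1) XB(1) unfolding phi_def
      by (simp add: mat_cong_traceless_iff mod6_coords6_eq_iff)
  qed
  finally show ?thesis by simp
qed

lemma dev_mult: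
  "q > 0 \<Longrightarrow> dev q ((mat 1 + real q *\<^sub>R X) ** (mat 1 + real q *\<^sub>R Y)) = X + Y + real q *\<^sub>R (X ** Y)"
  by (rule dev_eqI) (simp_all add: mat_2x2_eq_iff algebra_simps)

lemma phi_mult:
  assumes "p dvd q" "q > 0" "A \<in> Hcong (real q)" "B \<in> Hcong (real q)"
  shows "phi p q (A ** B) = mod6 p (add6 (coords6 (dev q A)) (coords6 (dev q B)))"
proof -
  define X Y where "X = dev q A" and "Y = dev q B"
  have X: "Zlam_mat X" "A = mat 1 + real q *\<^sub>R X" and Y: "Zlam_mat Y" "B = mat 1 + real q *\<^sub>R Y"
    using Hcong_dev[OF assms(2,3)] Hcong_dev[OF assms(2,4)] unfolding X_def Y_def by auto
  obtain r where "q = p * r" using assms(1) by (elim dvdE)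
  hence "mat_cong (real p) (real q *\<^sub>R (X ** Y) + (X + Y)) (X + Y)"
    using mat_cong_add_multiple[of "real r *\<^sub>R (X ** Y)"] X(1) Y(1)
    by (simp add: Zlam_mat_scaleR Zlam_mat_mult)
  hence "mod6 p (coords6 (X + Y + real q *\<^sub>R (X ** Y))) = mod6 p (coords6 (X + Y))"
    using X(1) Y(1) unfolding mat_cong_iff
    by (simp add: mod6_coords6_eq_iff Zlam_mat_add Zlam_mat_scaleR Zlam_mat_mult add.commute)
  moreover have "phi p q (A ** B) = mod6 p (coords6 (X + Y + real q *\<^sub>R (X ** Y)))"
    unfolding phi_def X(2) Y(2) dev_mult[OF assms(2)] ..
  ultimately show ?thesis using X(1) Y(1) by (simp add: coords6_add X_def Y_def)
qed

fun mat_pow :: "real^2^2 \<Rightarrow> nat \<Rightarrow> real^2^2" where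
  "mat_pow A 0 = mat 1"
| "mat_pow A (Suc n) = mat_pow A n ** A"

lemma mat_pow_in_H5: "A \<in> H5 \<Longrightarrow> mat_pow A n \<in> H5"
  by (induction n) (auto simp: H5.H5_one H5_mult)

lemma one_plus_quadratic_mult_one_plus:
  "(mat 1 + a *\<^sub>R (X :: real^2^2) + b *\<^sub>R (X ** X)) ** (mat 1 + c *\<^sub>R X)
   = (b * c) *\<^sub>R (X ** X ** X) + (mat 1 + (a + c) *\<^sub>R X + (b + a * c) *\<^sub>R (X ** X))"
  unfolding mat_2x2_eq_iff by (simp add: algebra_simps)

lemma mat_pow_one_plus_cong:
  assumes "Zlam_mat X"
  shows "mat_cong (real (q ^ 3)) (mat_pow (mat 1 + real q *\<^sub>R X) j)
           (mat 1 + (real j * real q) *\<^sub>R X + (real (j choose 2) * real q ^ 2) *\<^sub>R (X ** X))"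
proof (induction j)
  case 0
  show ?case by (simp add: mat_cong_refl numeral_2_eq_2)
next
  case (Suc j)
  let ?A = "mat 1 + real q *\<^sub>R X"
  let ?P = "\<lambda>j. mat 1 + (real j * real q) *\<^sub>R X + (real (j choose 2) * real q ^ 2) *\<^sub>R (X ** X)"
  have "Zlam_mat ?A" using assms by (intro Zlam_mat_add Zlam_mat_1 Zlam_mat_scaleR)
  hence "mat_cong (real (q ^ 3)) (mat_pow ?A (Suc j)) (?P j ** ?A)"
    using mat_cong_mult_right[OF _ Suc.IH] by simp
  also have "?P j ** ?A = real (q ^ 3) *\<^sub>R (real (j choose 2) *\<^sub>R (X ** X ** X)) + ?P (Suc j)"
    unfolding one_plus_quadratic_mult_one_plus
    by (simp add: algebra_simps power3_eq_cube power2_eq_square numeral_2_eq_2)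
  finally show ?case
    using assms by (blast intro: mat_cong_trans mat_cong_add_multiple Zlam_mat_scaleR Zlam_mat_mult)
qed

lemma mat_pow_odd_one_plus_cong:
  assumes "odd p" "p dvd q" "Zlam_mat X"
  shows "mat_cong (real (p * q * p)) (mat_pow (mat 1 + real q *\<^sub>R X) p) (mat 1 + real (p * q) *\<^sub>R X)"
proof -
  obtain r where r: "q = p * r" using assms(2) by (elim dvdE)
  obtain h where h: "p = 2 * h + 1" using assms(1) by (elim oddE)
  have "p * q * p dvd q ^ 3" using r by (simp add: power3_eq_cube)
  hence "mat_cong (real (p * q * p)) (mat_pow (mat 1 + real q *\<^sub>R X) p)
           (mat 1 + (real p * real q) *\<^sub>R X + (real (p choose 2) * real q ^ 2) *\<^sub>R (X ** X))"
    by (rule mat_cong_dvd_mono[OF _ mat_pow_one_plus_cong[OF assms(3)]])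
  \<comment> \<open>as \<open>p\<close> is odd, \<open>p\<close> divides \<open>p choose 2 = p h\<close>\<close>
  also have "real (p choose 2) * real q ^ 2 = real (p * q * p) * real (h * r)"
    using r h by (simp add: choose_two power2_eq_square, simp add: algebra_simps)
  hence "mat 1 + (real p * real q) *\<^sub>R X + (real (p choose 2) * real q ^ 2) *\<^sub>R (X ** X)
         = real (p * q * p) *\<^sub>R (real (h * r) *\<^sub>R (X ** X)) + (mat 1 + real (p * q) *\<^sub>R X)"
    by (simp add: algebra_simps)
  finally show ?thesis
    using assms(3) by (blast intro: mat_cong_trans mat_cong_add_multiple Zlam_mat_scaleR Zlam_mat_mult)
qed

lemma dev_mat_pow_odd:
  assumes "odd p" "p dvd q" "q > 0" "A \<in> Hcong (real q)"
  shows "mat_pow A p \<in> Hcong (real (p * q))" "mat_cong (real p) (dev (p * q) (mat_pow A p)) (dev q A)"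
proof -
  define X where "X = dev q A"
  have X: "Zlam_mat X" "A = mat 1 + real q *\<^sub>R X" using Hcong_dev[OF assms(3,4)] by (auto simp: X_def)
  have pq: "p * q > 0" using assms(1,3) by (simp add: odd_pos)
  have c: "mat_cong (real (p * q * p)) (mat_pow A p) (mat 1 + real (p * q) *\<^sub>R X)"
    unfolding X(2) by (rule mat_pow_odd_one_plus_cong[OF assms(1,2) X(1)])
  have "mat_cong (real (p * q)) (mat_pow A p) (mat 1 + real (p * q) *\<^sub>R X)"
    by (rule mat_cong_dvd_mono[OF _ c]) simp
  moreover have "mat_cong (real (p * q)) (mat 1 + real (p * q) *\<^sub>R X) (mat 1)"
    using mat_cong_add_multiple[OF X(1), of _ "mat 1"] by (simp add: add.commute)
  moreover have "mat_pow A p \<in> H5" using assms(4) Hcong_subset_H5 mat_pow_in_H5 by blast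
  ultimately show inH: "mat_pow A p \<in> Hcong (real (p * q))"
    by (simp add: Hcong_iff mat_cong_trans[of _ _ "mat 1 + real (p * q) *\<^sub>R X"])
  have "mat_cong (real (p * q * p)) (mat 1 + real (p * q) *\<^sub>R dev (p * q) (mat_pow A p))
          (mat 1 + real (p * q) *\<^sub>R X)"
    using c Hcong_dev(2)[OF pq inH] by simp
  thus "mat_cong (real p) (dev (p * q) (mat_pow A p)) (dev q A)"
    using mat_cong_one_plus_cancel[OF pq Hcong_dev(1)[OF pq inH] X(1)] by (simp add: X_def)
qed

definition E12 :: "real^2^2" where "E12 = mat2 0 1 0 0"

lemma Hcong_elem_dev_E12:
  assumes "odd p" "\<exists>\<sigma>\<in>Hcong (real p). mat_cong (real p ^ 2) \<sigma> (mat2 1 (real p) 0 1)" "k \<ge> 1"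
  shows "\<exists>s\<in>Hcong (real (p ^ k)). mat_cong (real p) (dev (p ^ k) s) E12"
  using assms(3)
proof (induction k rule: dec_induct)
  case base
  have p: "p > 0" using assms(1) by (simp add: odd_pos)
  obtain s where s: "s \<in> Hcong (real p)" "mat_cong (real (p * p)) s (mat2 1 (real p) 0 1)"
    using assms(2) by (auto simp: power2_eq_square)
  have "mat2 1 (real p) 0 1 = mat 1 + real p *\<^sub>R E12" by (simp add: E12_def mat_2x2_eq_iff)
  hence "mat_cong (real (p * p)) (mat 1 + real p *\<^sub>R dev p s) (mat 1 + real p *\<^sub>R E12)"
    using s(2) Hcong_dev(2)[OF p s(1)] by simp
  hence "mat_cong (real p) (dev p s) E12"
    using mat_cong_one_plus_cancel[OF p Hcong_dev(1)[OF p s(1)]] by (simp add: E12_def)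
  thus ?case using s(1) by auto
next
  case (step k)
  then obtain s where s: "s \<in> Hcong (real (p ^ k))" "mat_cong (real p) (dev (p ^ k) s) E12" by blast
  have "p dvd p ^ k" "p ^ k > 0" using step(1) assms(1) by (auto simp: odd_pos)
  from dev_mat_pow_odd[OF assms(1) this s(1)] s(2)
  show ?case by (auto simp: power_Suc intro: mat_cong_trans)
qed

lemma conj_Hcong:
  assumes "q > 0" "g \<in> H5" "s \<in> Hcong (real q)"
  shows "g ** s ** adj2 g \<in> Hcong (real q)" "dev q (g ** s ** adj2 g) = g ** dev q s ** adj2 g"
proof -
  have "g ** (mat 1 + real q *\<^sub>R dev q s) ** adj2 g = g ** adj2 g + real q *\<^sub>R (g ** dev q s ** adj2 g)"
    by (simp add: mat_2x2_eq_iff algebra_simps adj2_def)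
  hence e: "g ** s ** adj2 g = mat 1 + real q *\<^sub>R (g ** dev q s ** adj2 g)"
    using Hcong_dev(2)[OF assms(1,3)] mult_adj2_right[OF H5_det[OF assms(2)]] by simp
  have "Zlam_mat (g ** dev q s ** adj2 g)"
    using H5_Zlam_mat[OF assms(2)] Hcong_dev(1)[OF assms(1,3)] by (intro Zlam_mat_adj2 Zlam_mat_mult)
  hence "mat_cong (real q) (g ** s ** adj2 g) (mat 1)"
    unfolding e using mat_cong_add_multiple[of _ "real q" "mat 1"] by (simp add: add.commute)
  moreover have "g ** s ** adj2 g \<in> H5"
    using assms(2,3) Hcong_subset_H5 by (blast intro: H5_mult H5_adj2)
  ultimately show "g ** s ** adj2 g \<in> Hcong (real q)" by (simp add: Hcong_iff)
  show "dev q (g ** s ** adj2 g) = g ** dev q s ** adj2 g" by (rule dev_eqI[OF assms(1) e])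
qed

lemma conj_E12: "g ** E12 ** adj2 g = mat2 (- (g$1$1 * g$2$1)) (g$1$1 * g$1$1) (- (g$2$1 * g$2$1)) (g$1$1 * g$2$1)"
  by (simp add: mat_2x2_eq_iff E12_def adj2_def)

lemma conj_in_phi_image:
  assumes "q > 0" "s \<in> Hcong (real q)" "mat_cong (real p) (dev q s) E12" "g \<in> H5"
    and "- (g$1$1 * g$2$1) = of_int u0 + of_int u1 * lam" "g$1$1 * g$1$1 = of_int u2 + of_int u3 * lam"
    and "- (g$2$1 * g$2$1) = of_int u4 + of_int u5 * lam"
  shows "mod6 p (u0, u1, u2, u3, u4, u5) \<in> phi p q ` Hcong (real q)"
proof -
  note conj = conj_Hcong[OF assms(1,4,2)]
  have Zg: "Zlam_mat g" "Zlam_mat (adj2 g)" using H5_Zlam_mat[OF assms(4)] Zlam_mat_adj2 by auto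
  have "mat_cong (real p) (g ** dev q s ** adj2 g) (g ** E12 ** adj2 g)"
    using assms(3) Zg by (intro mat_cong_mult_right mat_cong_mult_left)
  hence "phi p q (g ** s ** adj2 g) = mod6 p (coords6 (g ** E12 ** adj2 g))"
    unfolding phi_def conj(2) mat_cong_iff
    using Zg Hcong_dev(1)[OF assms(1,2)]
    by (simp add: mod6_coords6_eq_iff Zlam_mat_mult E12_def)
  also have "\<dots> = mod6 p (u0, u1, u2, u3, u4, u5)"
    unfolding conj_E12 coords6_def using assms(5-7) by simp
  finally show ?thesis using conj(1) by (metis image_eqI)
qed

lemma mod6_smult6_mod: "mod6 p (smult6 (k mod int p) x) = mod6 p (smult6 k x)"
  by (cases x rule: prod_cases6) (simp add: mod_mult_left_eq)

lemma mod6_smult6_closed: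
  assumes "p > 0"
    and add: "\<And>u v. u \<in> S \<Longrightarrow> v \<in> S \<Longrightarrow> mod6 p (add6 u v) \<in> S"
    and "mod6 p (0, 0, 0, 0, 0, 0) \<in> S" "mod6 p x \<in> S"
  shows "mod6 p (smult6 k x) \<in> S"
proof -
  have "mod6 p (smult6 (int n) x) \<in> S" for n
  proof (induction n)
    case 0
    show ?case using assms(3) by (cases x rule: prod_cases6) simp
  next
    case (Suc n)
    have "smult6 (int (Suc n)) x = add6 (smult6 (int n) x) x"
      by (cases x rule: prod_cases6) (simp add: algebra_simps)
    thus ?case using add[OF Suc.IH assms(4)] by (simp add: mod6_add6_mod6)
  qed
  moreover have "k mod int p = int (nat (k mod int p))" using assms(1) by simp
  ultimately show ?thesis by (metis mod6_smult6_mod)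
qed

text \<open>With \<open>h = (p + 1) / 2\<close>, an inverse of \<open>2\<close> modulo \<open>p\<close>, the coefficients \<open>N\<^sub>i\<close> below
  combine the six vectors to \<open>t\<close> up to multiples of \<open>p\<close>.\<close>
lemma mod6_six_generators:
  assumes "odd p"
    and add: "\<And>u v. u \<in> S \<Longrightarrow> v \<in> S \<Longrightarrow> mod6 p (add6 u v) \<in> S"
    and "mod6 p (0, 0, 0, 0, 0, 0) \<in> S"
    and gens: "mod6 p (0, 0, 1, 0, 0, 0) \<in> S" "mod6 p (0, 0, 0, 0, -1, 0) \<in> S"
      "mod6 p (0, -1, 1, 1, -1, 0) \<in> S" "mod6 p (0, 1, 1, 1, -1, 0) \<in> S"
      "mod6 p (0, 1, 1, 0, -1, -1) \<in> S" "mod6 p (-1, -1, 1, 1, -1, -1) \<in> S"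
  shows "mod6 p (t0, t1, t2, t3, t4, t5) \<in> S"
proof -
  have p: "p > 0" using assms(1) by (simp add: odd_pos)
  have add': "mod6 p (add6 x y) \<in> S" if "mod6 p x \<in> S" "mod6 p y \<in> S" for x y
    using add[OF that] by (simp add: mod6_add6_mod6)
  note span = add' mod6_smult6_closed[OF p add assms(3)]
  obtain k where "p = 2 * k + 1" using assms(1) by (elim oddE)
  define h :: int where "h = int k + 1"
  have hp: "int p = 2 * h - 1" unfolding h_def using \<open>p = 2 * k + 1\<close> by simp
  define N0 N1 N2 N3 N4 N5 where "N0 = - t0 + t2 - t3 + t5" and "N1 = - t0 - t3 - t4 + t5"
    and "N2 = h * (3 * t0 - t1 + t3 - t5)" and "N3 = h * (- t0 + t1 + t3 + t5)"
    and "N4 = t0 - t5" and "N5 = - t0"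
  have "mod6 p (add6 (smult6 N0 (0, 0, 1, 0, 0, 0)) (add6 (smult6 N1 (0, 0, 0, 0, -1, 0))
          (add6 (smult6 N2 (0, -1, 1, 1, -1, 0)) (add6 (smult6 N3 (0, 1, 1, 1, -1, 0))
          (add6 (smult6 N4 (0, 1, 1, 0, -1, -1)) (smult6 N5 (-1, -1, 1, 1, -1, -1))))))) \<in> S"
    by (intro span gens)
  also have "add6 (smult6 N0 (0, 0, 1, 0, 0, 0)) (add6 (smult6 N1 (0, 0, 0, 0, -1, 0))
          (add6 (smult6 N2 (0, -1, 1, 1, -1, 0)) (add6 (smult6 N3 (0, 1, 1, 1, -1, 0))
          (add6 (smult6 N4 (0, 1, 1, 0, -1, -1)) (smult6 N5 (-1, -1, 1, 1, -1, -1))))))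
    = (t0, t1 + (2 * h - 1) * (- 2 * t0 + t1 + t5), t2 + (2 * h - 1) * (t0 + t3),
       t3 + (2 * h - 1) * (t0 + t3), t4 + (2 * h - 1) * (- (t0 + t3)), t5)"
    unfolding N0_def N1_def N2_def N3_def N4_def N5_def by (simp add: algebra_simps)
  finally show ?thesis unfolding hp[symmetric] by simp
qed

lemma card_range_mod6: "p > 0 \<Longrightarrow> card (range (mod6 p)) = p ^ 6"
proof -
  let ?B = "{0..<int p}"
  assume "p > 0"
  have "range (mod6 p) = ?B \<times> ?B \<times> ?B \<times> ?B \<times> ?B \<times> ?B"
  proof
    show "range (mod6 p) \<subseteq> ?B \<times> ?B \<times> ?B \<times> ?B \<times> ?B \<times> ?B"
      using \<open>p > 0\<close> by (auto simp: split_paired_all)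
    show "?B \<times> ?B \<times> ?B \<times> ?B \<times> ?B \<times> ?B \<subseteq> range (mod6 p)"
    proof
      fix t assume "t \<in> ?B \<times> ?B \<times> ?B \<times> ?B \<times> ?B \<times> ?B"
      hence "mod6 p t = t" by (cases t rule: prod_cases6) simp
      thus "t \<in> range (mod6 p)" by (metis rangeI)
    qed
  qed
  thus ?thesis by (simp add: card_cartesian_product eval_nat_numeral)
qed

lemma phi_image_eq_range_mod6:
  assumes "odd p" "p dvd q" "q > 0" "s \<in> Hcong (real q)" "mat_cong (real p) (dev q s) E12"
  shows "phi p q ` Hcong (real q) = range (mod6 p)"
proof
  show "phi p q ` Hcong (real q) \<subseteq> range (mod6 p)" by (auto simp: phi_def)
next
  let ?Img = "phi p q ` Hcong (real q)"
  note conj = conj_in_phi_image[OF assms(3-5)]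
  have add: "mod6 p (add6 u v) \<in> ?Img" if uv: "u \<in> ?Img" "v \<in> ?Img" for u v
  proof -
    obtain A B where AB: "A \<in> Hcong (real q)" "B \<in> Hcong (real q)" "u = phi p q A" "v = phi p q B"
      using uv by blast
    hence "phi p q (A ** B) = mod6 p (add6 u v)"
      using phi_mult[OF assms(2,3) AB(1,2)] by (simp add: phi_def mod6_add6_mod6)
    moreover have "A ** B \<in> Hcong (real q)"
      using AB(1,2) subgroup_H5_Hcong unfolding subgroup_H5_def by blast
    ultimately show ?thesis by (metis image_eqI)
  qed
  have "mod6 p (0, 0, 1, 0, 0, 0) \<in> ?Img" by (rule conj[OF H5_one]) simp_all
  moreover have "mod6 p (0, 0, 0, 0, -1, 0) \<in> ?Img"
    by (rule conj[OF Smat_in_H5]) (simp_all add: Smat_def)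
  moreover have "mod6 p (0, -1, 1, 1, -1, 0) \<in> ?Img"
    by (rule conj[OF H5_mult[OF Tmat_in_H5 Smat_in_H5]]) (simp_all add: Smat_def Tmat_def lam_times_lam)
  moreover have "mod6 p (0, 1, 1, 1, -1, 0) \<in> ?Img"
    by (rule conj[OF H5_mult[OF matrix_inv_Tmat_in_H5 Smat_in_H5]])
       (simp_all add: Smat_def matrix_inv_Tmat lam_times_lam)
  moreover have "mod6 p (0, 1, 1, 0, -1, -1) \<in> ?Img"
    by (rule conj[OF H5_mult[OF H5_mult[OF Smat_in_H5 Tmat_in_H5] Smat_in_H5]])
       (simp_all add: Smat_def Tmat_def lam_times_lam)
  moreover have "Tmat ** Smat ** Tmat ** Smat \<in> H5" by (intro H5_mult Smat_in_H5 Tmat_in_H5)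
  hence "mod6 p (-1, -1, 1, 1, -1, -1) \<in> ?Img"
    by (rule conj) (simp_all add: Smat_def Tmat_def lam_times_lam algebra_simps)
  moreover have "mod6 p (0, 0, 0, 0, 0, 0) \<in> ?Img"
  proof -
    have "dev q (mat 1) = mat2 (of_int 0 + of_int 0 * lam) (of_int 0 + of_int 0 * lam)
                                (of_int 0 + of_int 0 * lam) (of_int 0 + of_int 0 * lam)"
      by (simp add: dev_def mat_2x2_eq_iff)
    hence "phi p q (mat 1) = mod6 p (0, 0, 0, 0, 0, 0)"
      unfolding phi_def coords6_def by (simp only: mat2_nth coord0_eq coord1_eq)
    moreover have "mat 1 \<in> Hcong (real q)" using subgroup_H5_Hcong unfolding subgroup_H5_def by blast
    ultimately show ?thesis by (metis image_eqI)
  qed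
  ultimately have "mod6 p t \<in> ?Img" for t
    using mod6_six_generators[OF assms(1) add] by (cases t rule: prod_cases6) blast
  thus "range (mod6 p) \<subseteq> ?Img" by blast
qed

lemma grp_index_Hcong_step:
  assumes "odd p" "p dvd q" "q > 0" "s \<in> Hcong (real q)" "mat_cong (real p) (dev q s) E12"
  shows "grp_index (Hcong (real q)) (Hcong (real (p * q))) = p ^ 6"
proof -
  have "grp_index (Hcong (real q)) (Hcong (real (p * q))) = card (phi p q ` Hcong (real q))"
    by (rule grp_index_eq_card_image[OF subgroup_H5_Hcong Hcong_subset_H5 phi_eq_iff[OF assms(2,3)]])
  also have "\<dots> = p ^ 6"
    using phi_image_eq_range_mod6[OF assms] card_range_mod6 assms(1) by (simp add: odd_pos)
  finally show ?thesis .
qed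

theorem proposition4p3:
  fixes p :: nat
  assumes "prime p" and "odd p"
    and "\<exists>\<sigma>\<in>Hcong (real p). mat_cong (real p ^ 2) \<sigma> (mat2 1 (real p) 0 1)"
  shows "(\<forall>n::nat. n \<ge> 1 \<longrightarrow> grp_index (Hcong (real p ^ n)) (Hcong (real p ^ (n + 1))) = p ^ 6)
       \<and> (\<forall>n::nat. n \<ge> 1 \<longrightarrow> grp_index H5 (Hcong (real p ^ n)) = p ^ (6 * (n - 1)) * grp_index H5 (Hcong (real p)))"
proof -
  have index_step: "grp_index (Hcong (real (p ^ n))) (Hcong (real (p * p ^ n))) = p ^ 6"
    if n: "n \<ge> 1" for n
  proof -
    obtain s where s: "s \<in> Hcong (real (p ^ n))" "mat_cong (real p) (dev (p ^ n) s) E12"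
      using Hcong_elem_dev_E12[OF assms(2,3) n] by blast
    have "p dvd p ^ n" "p ^ n > 0" using n assms(2) by (auto simp: odd_pos dvd_power)
    from grp_index_Hcong_step[OF assms(2) this s] show ?thesis .
  qed
  have H5_index: "grp_index H5 (Hcong (real (p ^ n))) = p ^ (6 * (n - 1)) * grp_index H5 (Hcong (real p))"
    if "n \<ge> 1" for n
    using that
  proof (induction n rule: dec_induct)
    case (step n)
    have "p * p ^ n > 0" using assms(2) by (simp add: odd_pos)
    hence "grp_index H5 (Hcong (real (p * p ^ n)))
           = grp_index H5 (Hcong (real (p ^ n))) * grp_index (Hcong (real (p ^ n))) (Hcong (real (p * p ^ n)))"
      by (rule grp_index_Hcong_tower) simp
    also have "\<dots> = grp_index H5 (Hcong (real (p ^ n))) * p ^ 6"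
      by (simp only: index_step[OF step(1)])
    also have "\<dots> = p ^ (6 * (n - 1) + 6) * grp_index H5 (Hcong (real p))"
      by (simp only: step.IH power_add ac_simps)
    also have "6 * (n - 1) + 6 = 6 * (Suc n - 1)" using step(1) by simp
    finally show ?case by (simp only: power_Suc)
  qed simp
  show ?thesis
  proof (intro conjI allI impI)
    fix n :: nat assume n: "n \<ge> 1"
    have "real p ^ n = real (p ^ n)" "real p ^ (n + 1) = real (p * p ^ n)" by simp_all
    thus "grp_index (Hcong (real p ^ n)) (Hcong (real p ^ (n + 1))) = p ^ 6"
      using index_step[OF n] by (simp only:)
  next
    fix n :: nat assume n: "n \<ge> 1"
    have "real p ^ n = real (p ^ n)" by simp
    thus "grp_index H5 (Hcong (real p ^ n)) = p ^ (6 * (n - 1)) * grp_index H5 (Hcong (real p))"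
      using H5_index[OF n] by (simp only:)
  qed
qed

end
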